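(* Let $M\ge 1$ users be located at $\boldsymbol\psi_m=(x_m,y_m,0)$, $1\le m\le M$, with $-\frac{D_{\rm L}}{2}\le x_m\le \frac{D_{\rm L}}{2}$ and $-\frac{D_{\rm W}}{2}\le y_m\le \frac{D_{\rm W}}{2}$, and let a single antenna be placed at $(x,0,d)$ with $d>0$. For transmit powers $P_m\ge 0$ define $$R_m^{\rm OMA}=\frac{1}{M}\log\left(1+\frac{\eta P_m}{\sigma^2\big((x-x_m)^2+y_m^2+d^2\big)}\right),$$ where $\eta>0$, $\sigma^2>0$. Consider the problem $$\max_{P_1,\dots,P_M\ge 0,\ x}\ \min\{R_1^{\rm OMA},\dots,R_M^{\rm OMA}\}\quad\text{s.t.}\quad \sum_{m=1}^M P_m\le P,\quad -\frac{D_{\rm L}}{2}\le x\le \frac{D_{\rm L}}{2},$$ with $P>0$. Then an optimal antenna location is $$x^*=\frac{1}{M}\sum_{m=1}^M x_m,$$ and the optimal transmit powers are $$P_m^*=\frac{\tau_{mx^*}}{\sum_{i=1}^M\tau_{ix^*}}P,\qquad 1\le m\le M,$$ where $\tau_{mx^*}=(x^*-x_m)^2+y_m^2+d^2$.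
   Context: This models a pinching-antenna system: a single pinching antenna activated at point $(x,0,d)$ on a waveguide at height $d$ above the centre line of a rectangular service area of sides $D_{\rm L}$ (along the waveguide) and $D_{\rm W}$; users are served by time-division multiple access over $M$ slots (hence the factor $1/M$). $\eta=\frac{c^2}{16\pi^2 f_c^2}$ with $c$ the speed of light and $f_c$ the carrier frequency; $\sigma^2$ is the noise power; $\log$ is the natural logarithm. *)

theory Defs
  imports Complex_Main
begin

(* Users are indexed by m \<in> {0..<M}; user m is at (xs m, ys m, 0). *)

definition tau :: "(nat \<Rightarrow> real) \<Rightarrow> (nat \<Rightarrow> real) \<Rightarrow> real \<Rightarrow> real \<Rightarrow> nat \<Rightarrow> real" where
  "tau xs ys d x m = (x - xs m)^2 + (ys m)^2 + d^2"

definition R_OMA :: "nat \<Rightarrow> real \<Rightarrow> real \<Rightarrow> (nat \<Rightarrow> real) \<Rightarrow> (nat \<Rightarrow> real) \<Rightarrow> real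
    \<Rightarrow> (nat \<Rightarrow> real) \<Rightarrow> real \<Rightarrow> nat \<Rightarrow> real" where
  "R_OMA M eta sigma2 xs ys d p x m =
     (1 / real M) * ln (1 + eta * p m / (sigma2 * tau xs ys d x m))"

definition min_rate :: "nat \<Rightarrow> real \<Rightarrow> real \<Rightarrow> (nat \<Rightarrow> real) \<Rightarrow> (nat \<Rightarrow> real) \<Rightarrow> real
    \<Rightarrow> (nat \<Rightarrow> real) \<Rightarrow> real \<Rightarrow> real" where
  "min_rate M eta sigma2 xs ys d p x = Min ((\<lambda>m. R_OMA M eta sigma2 xs ys d p x m) ` {..<M})"

definition feasible :: "nat \<Rightarrow> real \<Rightarrow> real \<Rightarrow> (nat \<Rightarrow> real) \<Rightarrow> real \<Rightarrow> bool" where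
  "feasible M DL Ptot p x \<longleftrightarrow>
     (\<forall>m<M. 0 \<le> p m) \<and> (\<Sum>m<M. p m) \<le> Ptot \<and> - DL / 2 \<le> x \<and> x \<le> DL / 2"

end

theory Submission
  imports Defs
begin

(* For fixed antenna position x every feasible power allocation has some user m with
  p m / tau m \<le> Ptot / (\<Sum>i. tau i) (a mediant argument), so the minimum rate is at most the
  rate obtained when all signal-to-noise ratios are equal to eta Ptot / (sigma2 \<Sum>i. tau i).
  This bound is attained by the allocation proportional to tau, and it decreases in
  \<Sum>i. tau i = \<Sum>i. (x - xs i)^2 + const, which is minimal at the mean of the xs i. *)

lemma sum_power2_diff_mean_le:
  fixes a :: "'i \<Rightarrow> real"
  assumes "finite A"
  shows "(\<Sum>i\<in>A. ((\<Sum>j\<in>A. a j) / card A - a i)\<^sup>2) \<le> (\<Sum>i\<in>A. (x - a i)\<^sup>2)"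
proof (cases "A = {}")
  case False
  define c where "c = (\<Sum>j\<in>A. a j) / card A"
  have "(\<Sum>i\<in>A. (c - a i)) = 0"
    using assms False by (simp add: sum_subtractf c_def)
  moreover have "(x - a i)\<^sup>2 = (c - a i)\<^sup>2 + 2 * (x - c) * (c - a i) + (x - c)\<^sup>2" for i
    by (simp add: power2_eq_square algebra_simps)
  ultimately have "(\<Sum>i\<in>A. (x - a i)\<^sup>2) = (\<Sum>i\<in>A. (c - a i)\<^sup>2) + card A * (x - c)\<^sup>2"
    by (simp add: sum.distrib sum_distrib_left[symmetric])
  then show ?thesis
    by (simp add: c_def)
qed simp

lemma mean_between_bounds:
  fixes a :: "'i \<Rightarrow> real"
  assumes "finite A" "A \<noteq> {}" "\<And>i. i \<in> A \<Longrightarrow> lo \<le> a i \<and> a i \<le> hi"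
  shows "lo \<le> (\<Sum>i\<in>A. a i) / card A \<and> (\<Sum>i\<in>A. a i) / card A \<le> hi"
proof -
  have "card A * lo \<le> (\<Sum>i\<in>A. a i)" "(\<Sum>i\<in>A. a i) \<le> card A * hi"
    using sum_mono[of A "\<lambda>_. lo" a] sum_mono[of A a "\<lambda>_. hi"] assms(3) by auto
  moreover have "card A > 0"
    using assms(1,2) by (simp add: card_gt_0_iff)
  ultimately show ?thesis
    by (simp add: field_simps)
qed

lemma exists_ratio_le_ratio_of_sums:
  fixes p t :: "'i \<Rightarrow> real"
  assumes "finite A" "A \<noteq> {}" "\<And>i. i \<in> A \<Longrightarrow> t i > 0"
  shows "\<exists>i\<in>A. p i / t i \<le> (\<Sum>j\<in>A. p j) / (\<Sum>j\<in>A. t j)"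
proof (rule ccontr)
  define r where "r = (\<Sum>j\<in>A. p j) / (\<Sum>j\<in>A. t j)"
  assume "\<not> ?thesis"
  then have "\<And>i. i \<in> A \<Longrightarrow> r * t i < p i"
    using assms(3) by (auto simp: r_def not_le pos_less_divide_eq)
  then have "(\<Sum>i\<in>A. r * t i) < (\<Sum>i\<in>A. p i)"
    using assms(1,2) by (intro sum_strict_mono) auto
  moreover have "(\<Sum>j\<in>A. t j) > 0"
    using assms by (intro sum_pos) auto
  then have "(\<Sum>i\<in>A. r * t i) = (\<Sum>i\<in>A. p i)"
    unfolding sum_distrib_left[symmetric] by (simp add: r_def)
  ultimately show False
    by simp
qed

lemma tau_pos: "d > 0 \<Longrightarrow> tau xs ys d x m > 0"
  unfolding tau_def by (simp add: add_nonneg_pos)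

lemma sum_tau_pos: "M \<ge> 1 \<Longrightarrow> d > 0 \<Longrightarrow> (\<Sum>i<M. tau xs ys d x i) > 0"
  using tau_pos by (intro sum_pos) (auto simp: lessThan_empty_iff)

lemma sum_tau_mean_le:
  assumes "M \<ge> 1"
  shows "(\<Sum>i<M. tau xs ys d ((1 / real M) * (\<Sum>m<M. xs m)) i) \<le> (\<Sum>i<M. tau xs ys d x i)"
  using sum_power2_diff_mean_le[of "{..<M}" xs x]
  by (simp add: tau_def sum.distrib)

definition equalized_rate :: "nat \<Rightarrow> real \<Rightarrow> real \<Rightarrow> real \<Rightarrow> real \<Rightarrow> real" where
  "equalized_rate M eta sigma2 Ptot T = (1 / real M) * ln (1 + eta * Ptot / (sigma2 * T))"

lemma equalized_rate_antimono:
  assumes "0 < T" "T \<le> T'" "eta > 0" "sigma2 > 0" "Ptot > 0"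
  shows "equalized_rate M eta sigma2 Ptot T' \<le> equalized_rate M eta sigma2 Ptot T"
proof -
  have "eta * Ptot / (sigma2 * T') \<le> eta * Ptot / (sigma2 * T)"
    using assms by (intro divide_left_mono mult_left_mono mult_pos_pos) auto
  moreover have "0 \<le> eta * Ptot / (sigma2 * T')"
    using assms by simp
  ultimately show ?thesis
    unfolding equalized_rate_def by (intro mult_left_mono) auto
qed

lemma R_OMA_eq:
  "R_OMA M eta sigma2 xs ys d p x m = (1 / real M) * ln (1 + eta * (p m / tau xs ys d x m) / sigma2)"
  unfolding R_OMA_def by (simp add: field_simps)

lemma R_OMA_le_equalized_rate:
  assumes "0 \<le> p m" "p m / tau xs ys d x m \<le> Ptot / T" "d > 0" "eta > 0" "sigma2 > 0"
  shows "R_OMA M eta sigma2 xs ys d p x m \<le> equalized_rate M eta sigma2 Ptot T"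
proof -
  have "eta * (p m / tau xs ys d x m) / sigma2 \<le> eta * (Ptot / T) / sigma2"
    using assms by (intro divide_right_mono mult_left_mono) auto
  moreover have "0 \<le> eta * (p m / tau xs ys d x m) / sigma2"
    using assms tau_pos[of d xs ys x m] by simp
  ultimately show ?thesis
    unfolding R_OMA_eq equalized_rate_def by (intro mult_left_mono) (auto simp: field_simps)
qed

lemma min_rate_le_R_OMA:
  "m < M \<Longrightarrow> min_rate M eta sigma2 xs ys d p x \<le> R_OMA M eta sigma2 xs ys d p x m"
  unfolding min_rate_def by (intro Min_le) auto

lemma min_rate_le_equalized_rate:
  assumes "M \<ge> 1" "d > 0" "eta > 0" "sigma2 > 0" "feasible M DL Ptot p x"
  shows "min_rate M eta sigma2 xs ys d p x
           \<le> equalized_rate M eta sigma2 Ptot (\<Sum>i<M. tau xs ys d x i)"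
proof -
  define T where "T = (\<Sum>i<M. tau xs ys d x i)"
  have "T > 0"
    using sum_tau_pos[OF assms(1,2)] by (simp add: T_def)
  have "{..<M} \<noteq> {}"
    using assms(1) by (simp add: lessThan_empty_iff)
  then obtain m where m: "m < M" "p m / tau xs ys d x m \<le> (\<Sum>i<M. p i) / T"
    using exists_ratio_le_ratio_of_sums[of "{..<M}" "tau xs ys d x" p] tau_pos[OF assms(2)]
    unfolding T_def by auto
  moreover have "(\<Sum>i<M. p i) / T \<le> Ptot / T"
    using assms(5) \<open>T > 0\<close> unfolding feasible_def by (intro divide_right_mono) auto
  ultimately have "R_OMA M eta sigma2 xs ys d p x m \<le> equalized_rate M eta sigma2 Ptot T"
    using assms m(1) unfolding feasible_def by (intro R_OMA_le_equalized_rate) auto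
  with min_rate_le_R_OMA[OF m(1)] show ?thesis
    unfolding T_def by (rule order_trans)
qed

lemma feasible_proportional_allocation:
  assumes "M \<ge> 1" "d > 0" "Ptot \<ge> 0" "- DL / 2 \<le> x" "x \<le> DL / 2"
  shows "feasible M DL Ptot (\<lambda>m. tau xs ys d x m / (\<Sum>i<M. tau xs ys d x i) * Ptot) x"
proof -
  have "(\<Sum>i<M. tau xs ys d x i) > 0"
    using sum_tau_pos[OF assms(1,2)] .
  moreover from this have "(\<Sum>m<M. tau xs ys d x m / (\<Sum>i<M. tau xs ys d x i) * Ptot) = Ptot"
    by (simp add: sum_distrib_right[symmetric] sum_divide_distrib[symmetric])
  ultimately show ?thesis
    using assms tau_pos[OF assms(2)] unfolding feasible_def by (simp add: less_imp_le)
qed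

lemma min_rate_proportional_allocation:
  fixes xs ys :: "nat \<Rightarrow> real" and x Ptot :: real
  assumes "M \<ge> 1" "d > 0" "sigma2 > 0"
  defines "q \<equiv> (\<lambda>m. tau xs ys d x m / (\<Sum>i<M. tau xs ys d x i) * Ptot)"
  shows "min_rate M eta sigma2 xs ys d q x
           = equalized_rate M eta sigma2 Ptot (\<Sum>i<M. tau xs ys d x i)"
proof -
  have "R_OMA M eta sigma2 xs ys d q x m = equalized_rate M eta sigma2 Ptot (\<Sum>i<M. tau xs ys d x i)"
    for m
    using tau_pos[OF assms(2), of xs ys x m] assms(3)
    by (simp add: R_OMA_def equalized_rate_def q_def field_simps)
  moreover have "{..<M} \<noteq> {}"
    using assms(1) by (simp add: lessThan_empty_iff)
  ultimately show ?thesis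
    unfolding min_rate_def by (simp add: image_constant_conv)
qed

theorem lemma1:
  fixes M :: nat and xs ys :: "nat \<Rightarrow> real" and DL DW d eta sigma2 Ptot :: real
  assumes "M \<ge> 1"
    and "\<And>m. m < M \<Longrightarrow> - DL / 2 \<le> xs m \<and> xs m \<le> DL / 2"
    and "\<And>m. m < M \<Longrightarrow> - DW / 2 \<le> ys m \<and> ys m \<le> DW / 2"
    and "d > 0" and "eta > 0" and "sigma2 > 0" and "Ptot > 0"
  defines "xstar \<equiv> (1 / real M) * (\<Sum>m<M. xs m)"
  defines "pstar \<equiv> (\<lambda>m. tau xs ys d xstar m / (\<Sum>i<M. tau xs ys d xstar i) * Ptot)"
  shows "feasible M DL Ptot pstar xstar \<and>
         (\<forall>p x. feasible M DL Ptot p x \<longrightarrow>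
            min_rate M eta sigma2 xs ys d p x \<le> min_rate M eta sigma2 xs ys d pstar xstar)"
proof -
  define T where "T x = (\<Sum>i<M. tau xs ys d x i)" for x
  have "- DL / 2 \<le> xstar \<and> xstar \<le> DL / 2"
    using mean_between_bounds[of "{..<M}" "- DL / 2" xs "DL / 2"] assms(1,2)
    by (simp add: xstar_def lessThan_empty_iff)
  then have feasible_star: "feasible M DL Ptot pstar xstar"
    unfolding pstar_def using assms(1,4,7) by (intro feasible_proportional_allocation) auto
  have "min_rate M eta sigma2 xs ys d p x \<le> min_rate M eta sigma2 xs ys d pstar xstar"
    if "feasible M DL Ptot p x" for p x
  proof -
    have "min_rate M eta sigma2 xs ys d p x \<le> equalized_rate M eta sigma2 Ptot (T x)"
      using min_rate_le_equalized_rate that assms(1,4-6) unfolding T_def by blast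
    also have "\<dots> \<le> equalized_rate M eta sigma2 Ptot (T xstar)"
      using sum_tau_mean_le[OF assms(1)] sum_tau_pos[OF assms(1,4)] assms(5-7)
      by (intro equalized_rate_antimono) (auto simp: T_def xstar_def)
    also have "\<dots> = min_rate M eta sigma2 xs ys d pstar xstar"
      using min_rate_proportional_allocation[OF assms(1,4,6)] by (simp add: T_def pstar_def)
    finally show ?thesis .
  qed
  with feasible_star show ?thesis
    by blast
qed

end
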